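(* Let $R>0$, $L>0$, and let $f$ be convex and $L$-Lipschitz on an open convex neighborhood of $B:=\{u\in\mathbb{R}^k:\|u\|_2\le R\}$. Let $h=\frac{1}{2L}$ and let $\{u^{(1)},\dots,u^{(m)}\}\subseteq B$ be an $h$-net of $B$ (every $u\in B$ has some $i$ with $\|u-u^{(i)}\|_2\le h$). For each $i$ pick $g_i\in\partial f(u^{(i)})$ and define $\ell_i(u):=f(u^{(i)})+\langle g_i,u-u^{(i)}\rangle$, and define $$G(u):=1+\log\Big(\sum_{i=1}^m\exp(\ell_i(u))\Big).$$ Then for all $u\in B$, $$f(u)\le G(u)\le f(u)+1+\log m.$$ Moreover, such an $h$-net can be chosen with $m\le(1+4LR)^k$.
   Context: $\partial f(u)$ denotes the subdifferential of the convex function $f$ at $u$. *)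

theory Defs
  imports "HOL-Analysis.Analysis"
begin

definition subdifferential :: "('a::real_inner \<Rightarrow> real) \<Rightarrow> 'a set \<Rightarrow> 'a \<Rightarrow> 'a set" where
  "subdifferential f U x = {g. \<forall>y\<in>U. f x + inner g (y - x) \<le> f y}"

definition is_net :: "real \<Rightarrow> 'a::real_normed_vector set \<Rightarrow> nat \<Rightarrow> (nat \<Rightarrow> 'a) \<Rightarrow> bool" where
  "is_net h B m pts \<longleftrightarrow> (\<forall>i<m. pts i \<in> B) \<and> (\<forall>v\<in>B. \<exists>i<m. norm (v - pts i) \<le> h)"

end

theory Submission
  imports Defs
begin

text \<open>
  Each affine minorant \<open>\<ell>\<^sub>i\<close> lies below \<open>f\<close> on the ball, so the soft maximum
  \<open>ln (\<Sum>\<^sub>i exp \<ell>\<^sub>i)\<close> exceeds \<open>f\<close> by at most \<open>ln m\<close>.  Conversely the subgradient of a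
  Lipschitz function has norm at most \<open>L\<close>, so the minorant attached to a net point within
  distance \<open>h = 1/(2L)\<close> of \<open>u\<close> is at least \<open>f u - 2Lh = f u - 1\<close>, and the soft maximum
  dominates every single term.  A maximal \<open>h\<close>-separated subset of the ball is an \<open>h\<close>-net;
  the balls of radius \<open>h/2\<close> around its points are disjoint and lie in the ball of radius
  \<open>R + h/2\<close>, and comparing volumes gives \<open>m \<le> (1 + 2R/h)\<^sup>k = (1 + 4LR)\<^sup>k\<close>.
\<close>

lemma ln_sum_exp_ge:
  fixes a :: "'i \<Rightarrow> real"
  assumes "finite I" and "j \<in> I"
  shows "a j \<le> ln (\<Sum>i\<in>I. exp (a i))"
proof -
  have "0 < (\<Sum>i\<in>I. exp (a i))"
    using assms by (intro sum_pos2[of _ j]) auto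
  moreover have "exp (a j) \<le> (\<Sum>i\<in>I. exp (a i))"
    using assms by (intro member_le_sum) auto
  ultimately show ?thesis by (simp add: ln_ge_iff)
qed

lemma ln_sum_exp_le:
  fixes a :: "'i \<Rightarrow> real"
  assumes "finite I" and "I \<noteq> {}" and "\<And>i. i \<in> I \<Longrightarrow> a i \<le> c"
  shows "ln (\<Sum>i\<in>I. exp (a i)) \<le> c + ln (card I)"
proof -
  have pos: "0 < (\<Sum>i\<in>I. exp (a i))"
    using assms by (intro sum_pos) auto
  have "(\<Sum>i\<in>I. exp (a i)) \<le> (\<Sum>i\<in>I. exp c)"
    using assms by (intro sum_mono) auto
  also have "\<dots> = card I * exp c" by simp
  finally have "ln (\<Sum>i\<in>I. exp (a i)) \<le> ln (card I * exp c)"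
    using pos by simp
  also have "\<dots> = c + ln (card I)"
    using assms by (simp add: ln_mult card_gt_0_iff)
  finally show ?thesis .
qed

lemma subdifferential_norm_le_lipschitz:
  fixes f :: "'a::real_inner \<Rightarrow> real"
  assumes "open U" and lip: "L-lipschitz_on U f" and x: "x \<in> U"
    and g: "g \<in> subdifferential f U x"
  shows "norm g \<le> L"
proof (cases "g = 0")
  case True
  then show ?thesis using lipschitz_on_nonneg[OF lip] by simp
next
  case False
  then have ng: "norm g > 0" by simp
  obtain e where e: "e > 0" "ball x e \<subseteq> U"
    using \<open>open U\<close> x open_contains_ball by blast
  define t where "t = e / 2"
  have t: "0 < t" "t < e" using e by (auto simp: t_def)
  define y where "y = x + (t / norm g) *\<^sub>R g"
  have "dist y x = t" using ng t by (simp add: y_def dist_norm)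
  then have y: "y \<in> U" using e t by (auto simp: dist_commute)
  have "t * norm g = inner g (y - x)"
    using ng by (simp add: y_def power2_norm_eq_inner[symmetric] power2_eq_square)
  also have "\<dots> \<le> f y - f x"
    using g y by (auto simp: subdifferential_def)
  also have "\<dots> \<le> L * dist y x"
    using lipschitz_onD[OF lip y x] by (simp add: dist_real_def)
  also have "\<dots> = t * L" using \<open>dist y x = t\<close> by simp
  finally show ?thesis using t by simp
qed

lemma affine_minorant_ge_near:
  fixes f :: "'a::real_inner \<Rightarrow> real"
  assumes lip: "L-lipschitz_on U f" and "x \<in> U" and "v \<in> U" and "norm g \<le> L"
  shows "f v - 2 * L * norm (v - x) \<le> f x + inner g (v - x)"
proof -
  have "f v - f x \<le> L * norm (v - x)"
    using lipschitz_onD[OF lip \<open>v \<in> U\<close> \<open>x \<in> U\<close>] by (simp add: dist_real_def dist_norm)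
  moreover have "- inner g (v - x) \<le> L * norm (v - x)"
  proof -
    have "- inner g (v - x) \<le> norm g * norm (v - x)"
      using Cauchy_Schwarz_ineq2[of g "v - x"] by linarith
    also have "\<dots> \<le> L * norm (v - x)"
      using \<open>norm g \<le> L\<close> by (intro mult_right_mono) auto
    finally show ?thesis .
  qed
  ultimately show ?thesis by linarith
qed

lemma ln_sum_exp_affine_minorants_bounds:
  fixes f :: "'a::real_inner \<Rightarrow> real"
  assumes "open U" and "B \<subseteq> U" and lip: "L-lipschitz_on U f"
    and net: "is_net h B m pts" and g: "\<forall>i<m. g i \<in> subdifferential f U (pts i)"
    and v: "v \<in> B"
  shows "f v - 2 * L * h \<le> ln (\<Sum>i<m. exp (f (pts i) + inner (g i) (v - pts i)))"
    and "ln (\<Sum>i<m. exp (f (pts i) + inner (g i) (v - pts i))) \<le> f v + ln m"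
proof -
  obtain j where j: "j < m" "norm (v - pts j) \<le> h"
    using net v by (auto simp: is_net_def)
  have vU: "v \<in> U" and pU: "\<And>i. i < m \<Longrightarrow> pts i \<in> U"
    using net v \<open>B \<subseteq> U\<close> by (auto simp: is_net_def)
  have "norm (g j) \<le> L"
    using subdifferential_norm_le_lipschitz[OF \<open>open U\<close> lip pU] g j by blast
  then have "f v - 2 * L * norm (v - pts j) \<le> f (pts j) + inner (g j) (v - pts j)"
    using affine_minorant_ge_near[OF lip pU vU] j by blast
  moreover have "2 * L * norm (v - pts j) \<le> 2 * L * h"
    using j lipschitz_on_nonneg[OF lip] by (intro mult_left_mono) auto
  moreover have "f (pts j) + inner (g j) (v - pts j)
      \<le> ln (\<Sum>i<m. exp (f (pts i) + inner (g i) (v - pts i)))"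
    using j by (intro ln_sum_exp_ge) auto
  ultimately show "f v - 2 * L * h \<le> ln (\<Sum>i<m. exp (f (pts i) + inner (g i) (v - pts i)))"
    by linarith
  have "f (pts i) + inner (g i) (v - pts i) \<le> f v" if "i \<in> {..<m}" for i
    using g vU that by (auto simp: subdifferential_def)
  with j show "ln (\<Sum>i<m. exp (f (pts i) + inner (g i) (v - pts i))) \<le> f v + ln m"
    using ln_sum_exp_le[of "{..<m}"] by fastforce
qed

definition separated :: "real \<Rightarrow> 'a::metric_space set \<Rightarrow> bool" where
  "separated h S \<longleftrightarrow> (\<forall>p\<in>S. \<forall>q\<in>S. p \<noteq> q \<longrightarrow> h < dist p q)"

lemma separated_disjoint_half_balls:
  assumes "separated h S"
  shows "disjoint_family_on (\<lambda>p. ball p (h/2)) S"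
  unfolding disjoint_family_on_def
proof (intro ballI impI)
  fix p q assume pq: "p \<in> S" "q \<in> S" "p \<noteq> q"
  show "ball p (h/2) \<inter> ball q (h/2) = {}"
  proof (rule ccontr)
    assume "ball p (h/2) \<inter> ball q (h/2) \<noteq> {}"
    then obtain x where "dist p x < h/2" "dist q x < h/2" by auto
    then have "dist p q < h" using dist_triangle[of p q x] by (simp add: dist_commute)
    with assms pq show False by (force simp: separated_def)
  qed
qed

lemma separated_card_le:
  fixes S :: "'a::euclidean_space set"
  assumes "finite S" and S: "S \<subseteq> cball 0 R" and "separated h S" and "h > 0" and "R \<ge> 0"
  shows "real (card S) \<le> ((R + h/2) / (h/2)) ^ DIM('a)"
proof -
  define c where "c = unit_ball_vol (real DIM('a))"
  have "c > 0" unfolding c_def by simp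
  have "card S * (c * (h/2) ^ DIM('a)) = (\<Sum>p\<in>S. measure lborel (ball p (h/2)))"
    using \<open>h > 0\<close> by (simp add: content_ball c_def)
  also have "\<dots> = measure lborel (\<Union>p\<in>S. ball p (h/2))"
    using \<open>h > 0\<close> separated_disjoint_half_balls[OF \<open>separated h S\<close>]
    by (intro measure_finite_Union[symmetric, OF \<open>finite S\<close>]) (auto simp: emeasure_ball)
  also have "\<dots> \<le> measure lborel (ball (0::'a) (R + h/2))"
  proof (rule measure_mono_fmeasurable)
    show "(\<Union>p\<in>S. ball p (h/2)) \<subseteq> ball 0 (R + h/2)"
    proof
      fix x assume "x \<in> (\<Union>p\<in>S. ball p (h/2))"
      then obtain p where "p \<in> S" "dist p x < h/2" by auto
      moreover have "norm x \<le> norm p + dist p x"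
        using norm_triangle_ineq[of p "x - p"] by (simp add: dist_norm norm_minus_commute)
      ultimately show "x \<in> ball 0 (R + h/2)" using S by force
    qed
  qed (use \<open>h > 0\<close> \<open>R \<ge> 0\<close> in \<open>auto simp: fmeasurable_def emeasure_ball intro!: borel_open\<close>)
  also have "\<dots> = c * (R + h/2) ^ DIM('a)"
    using \<open>h > 0\<close> \<open>R \<ge> 0\<close> by (simp add: content_ball c_def)
  finally have "card S * (h/2) ^ DIM('a) \<le> (R + h/2) ^ DIM('a)"
    using \<open>c > 0\<close> by (simp add: mult.left_commute)
  moreover have "(h/2) ^ DIM('a) > 0" using \<open>h > 0\<close> by simp
  ultimately show ?thesis by (simp only: power_divide pos_le_divide_eq)
qed

text \<open>Maximal cardinality rather than maximality under inclusion: such a set exists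
  because \<open>separated_card_le\<close> bounds the cardinalities.\<close>

lemma max_card_separated_covers:
  assumes S: "finite S" "S \<subseteq> B" "separated h S" "h > 0"
    and max: "\<And>T. finite T \<Longrightarrow> T \<subseteq> B \<Longrightarrow> separated h T \<Longrightarrow> card T \<le> card S"
    and w: "w \<in> B"
  shows "\<exists>p\<in>S. dist w p \<le> h"
proof (rule ccontr)
  assume "\<not> ?thesis"
  then have far: "\<forall>p\<in>S. h < dist w p" by auto
  then have "w \<notin> S" using \<open>h > 0\<close> by fastforce
  have "separated h (insert w S)"
    using S far by (auto simp: separated_def dist_commute)
  then have "card (insert w S) \<le> card S"
    using S w by (intro max) auto
  with \<open>finite S\<close> \<open>w \<notin> S\<close> show False by simp
qed

lemma is_net_enumerate:
  assumes "finite S" and "S \<subseteq> B" and cover: "\<forall>w\<in>B. \<exists>p\<in>S. norm (w - p) \<le> h"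
  shows "\<exists>pts. is_net h B (card S) pts"
proof -
  obtain pts where pts: "bij_betw pts {..<card S} S"
    using ex_bij_betw_nat_finite[OF \<open>finite S\<close>] by (auto simp: atLeast0LessThan)
  have "\<forall>i<card S. pts i \<in> B"
    using bij_betw_apply[OF pts] \<open>S \<subseteq> B\<close> by auto
  moreover have "\<exists>i<card S. norm (w - pts i) \<le> h" if w: "w \<in> B" for w
  proof -
    obtain p where "p \<in> S" "norm (w - p) \<le> h" using cover w by blast
    moreover obtain i where "i < card S" "pts i = p"
      using bij_betw_imp_surj_on[OF pts] \<open>p \<in> S\<close> by (metis imageE lessThan_iff)
    ultimately show ?thesis by blast
  qed
  ultimately have "is_net h B (card S) pts" by (simp add: is_net_def)
  then show ?thesis by blast
qed

lemma exists_net_card_le: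
  assumes "h > 0" and "R \<ge> 0"
  shows "\<exists>m (pts :: nat \<Rightarrow> 'a::euclidean_space). is_net h (cball 0 R) m pts
           \<and> real m \<le> ((R + h/2) / (h/2)) ^ DIM('a)"
proof -
  define P where "P S \<longleftrightarrow> finite S \<and> S \<subseteq> cball (0::'a) R \<and> separated h S" for S
  define N where "N = nat \<lfloor>((R + h/2) / (h/2)) ^ DIM('a)\<rfloor>"
  have bound: "real (card S) \<le> ((R + h/2) / (h/2)) ^ DIM('a)" if "P S" for S
    using separated_card_le that assms by (auto simp: P_def)
  then have "\<forall>S. P S \<longrightarrow> card S < N + 1"
    by (auto simp: N_def less_Suc_eq_le le_nat_floor)
  moreover have "P {}" by (simp add: P_def separated_def)
  ultimately obtain S where S: "P S" and max: "\<And>T. P T \<Longrightarrow> card T \<le> card S"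
    using ex_has_greatest_nat[of P "{}" card "N + 1"] by blast
  have "\<forall>w\<in>cball 0 R. \<exists>p\<in>S. norm (w - p) \<le> h"
    using max_card_separated_covers[of S "cball 0 R" h] S max \<open>h > 0\<close>
    by (auto simp: P_def dist_norm)
  then obtain pts :: "nat \<Rightarrow> 'a" where "is_net h (cball 0 R) (card S) pts"
    using is_net_enumerate[of S "cball 0 R" h] S by (auto simp: P_def)
  with bound[OF S] show ?thesis by blast
qed

theorem lemma3p2:
  fixes f :: "'a::euclidean_space \<Rightarrow> real" and R L :: real and U :: "'a set"
  assumes "R > 0" and "L > 0"
    and "open U" and "convex U" and "cball 0 R \<subseteq> U"
    and "convex_on U f" and "L-lipschitz_on U f"
  shows "(\<forall>m pts g. is_net (1 / (2 * L)) (cball 0 R) m pts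
            \<and> (\<forall>i<m. g i \<in> subdifferential f U (pts i)) \<longrightarrow>
            (\<forall>v\<in>cball 0 R.
               f v \<le> 1 + ln (\<Sum>i<m. exp (f (pts i) + inner (g i) (v - pts i)))
             \<and> 1 + ln (\<Sum>i<m. exp (f (pts i) + inner (g i) (v - pts i))) \<le> f v + 1 + ln (real m)))
       \<and> (\<exists>m (pts :: nat \<Rightarrow> 'a). is_net (1 / (2 * L)) (cball 0 R) m pts
            \<and> real m \<le> (1 + 4 * L * R) ^ DIM('a))"
proof -
  have "2 * L * (1 / (2 * L)) = 1"
    and ratio: "(R + 1 / (2 * L) / 2) / (1 / (2 * L) / 2) = 1 + 4 * L * R"
    using \<open>L > 0\<close> by (auto simp: field_simps)
  show ?thesis
  proof (intro conjI allI impI ballI)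
    fix m :: nat and pts g :: "nat \<Rightarrow> 'a" and v :: 'a
    assume net: "is_net (1 / (2 * L)) (cball 0 R) m pts \<and> (\<forall>i<m. g i \<in> subdifferential f U (pts i))"
      and v: "v \<in> cball 0 R"
    note bounds = ln_sum_exp_affine_minorants_bounds[OF \<open>open U\<close> \<open>cball 0 R \<subseteq> U\<close>
        \<open>L-lipschitz_on U f\<close> conjunct1[OF net] conjunct2[OF net] v]
    show "f v \<le> 1 + ln (\<Sum>i<m. exp (f (pts i) + inner (g i) (v - pts i)))"
      using bounds(1) \<open>2 * L * (1 / (2 * L)) = 1\<close> by linarith
    show "1 + ln (\<Sum>i<m. exp (f (pts i) + inner (g i) (v - pts i))) \<le> f v + 1 + ln (real m)"
      using bounds(2) by linarith
  next
    show "\<exists>m (pts :: nat \<Rightarrow> 'a). is_net (1 / (2 * L)) (cball 0 R) m pts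
            \<and> real m \<le> (1 + 4 * L * R) ^ DIM('a)"
      using exists_net_card_le[of "1 / (2 * L)" R] \<open>L > 0\<close> \<open>R > 0\<close> unfolding ratio by simp
  qed
qed

end
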